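(* Assume $\sigma_1(x)=\sigma_1'(0)(x-a_1)$ with $\sigma_1'(0)\ne0$ and $a_1\ne0$ real, and that $\sigma_2(x)=\tfrac12\sigma_2''(0)(x-a_2)(x-b_2)$ (where $\tfrac12\sigma_2''(0)=(q-1)\tau'(0)$) has real zeros with $a_2<0<a_1<b_2$; assume $\Lambda_q:=\tau'(0)/\sigma_1'(0)<0$. Put $a=b_2$ and $$\rho(x)=|x|^{\alpha}\sqrt{x^{\log_qx-1}}\,\frac{(qa_2/x,\,qa/x;q)_\infty}{(a_1/x;q)_\infty},\qquad q^{\alpha}=\frac{q^{-2}\tfrac12\sigma_2''(0)}{\sigma_1'(0)}.$$ Then there exist polynomials $P_n$, $n\in\mathbb{N}_0$, with $P_n$ of degree $n$ a solution of the q-EHT with $\lambda=\lambda_n$, and nonzero constants $d_n^2$, such that for all $m,n\in\mathbb{N}_0$ $$\int_a^{\infty}P_n(x)P_m(x)\rho(x)\,d_{q^{-1}}x=d_n^2\delta_{mn},$$ i.e. orthogonality with respect to $\rho$ supported on $\{q^{-k}a\}_{k\in\mathbb{N}_0}$.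
   Context: Throughout $0<q<1$. For a function $y$ and $\zeta\in\{q,q^{-1}\}$, $D_\zeta y(x)=\frac{y(x)-y(\zeta x)}{(1-\zeta)x}$ for $x\ne0$ and $D_\zeta y(0)=y'(0)$; $[n]_q=\frac{1-q^n}{1-q}$. Let $\sigma_1$ be a real polynomial of degree at most two, $\tau(x)=\tau'(0)x+\tau(0)$ a real polynomial with $\tau'(0)\ne0$, and $\sigma_2(x):=q[\sigma_1(x)+(1-q^{-1})x\tau(x)]$. The q-EHT with parameter $n$ is $\sigma_1(x)D_{q^{-1}}D_qy(x)+\tau(x)D_qy(x)+\lambda_ny(x)=0$, $\lambda_n=-[n]_q\big(\tau'(0)+\tfrac12[n-1]_{q^{-1}}\sigma_1''(0)\big)$. $(\beta;q)_\infty=\prod_{k\ge0}(1-\beta q^k)$, $(\beta_1,\dots,\beta_r;q)_\infty=\prod_i(\beta_i;q)_\infty$. For $q^\alpha=c$ ($c\ne0$), $\alpha$ is any complex number with $e^{\alpha\ln q}=c$ and $|x|^\alpha:=e^{\alpha\ln|x|}$; for $x>0$, $\sqrt{x^{\log_qx-1}}:=\exp\big(\tfrac12(\log_qx-1)\ln x\big)$. For $a>0$, $\int_a^\infty f(x)\,d_{q^{-1}}x=(q^{-1}-1)a\sum_{j\ge0}q^{-j}f(q^{-j}a)$. *)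

theory Defs
  imports "HOL-Analysis.Analysis" "HOL-Computational_Algebra.Polynomial"
begin

definition qD :: "real \<Rightarrow> (real \<Rightarrow> real) \<Rightarrow> real \<Rightarrow> real" where
  "qD \<zeta> y x = (if x = 0 then deriv y 0 else (y x - y (\<zeta> * x)) / ((1 - \<zeta>) * x))"

definition qnum :: "real \<Rightarrow> int \<Rightarrow> real" where
  "qnum q k = (1 - q powi k) / (1 - q)"

definition qlambda :: "real \<Rightarrow> real poly \<Rightarrow> real poly \<Rightarrow> nat \<Rightarrow> real" where
  "qlambda q \<sigma>1 \<tau> n =
     - qnum q (int n) * (poly (pderiv \<tau>) 0
        + 1/2 * qnum (1/q) (int n - 1) * poly (pderiv (pderiv \<sigma>1)) 0)"

definition qEHT :: "real \<Rightarrow> real poly \<Rightarrow> real poly \<Rightarrow> nat \<Rightarrow> (real \<Rightarrow> real) \<Rightarrow> bool" where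
  "qEHT q \<sigma>1 \<tau> n y \<longleftrightarrow>
     (\<forall>x. poly \<sigma>1 x * qD (1/q) (qD q y) x + poly \<tau> x * qD q y x + qlambda q \<sigma>1 \<tau> n * y x = 0)"

definition qpoch_inf :: "real \<Rightarrow> real \<Rightarrow> real" where
  "qpoch_inf \<beta> q = (\<Prod>k. 1 - \<beta> * q ^ k)"

definition rho_w :: "real \<Rightarrow> complex \<Rightarrow> real \<Rightarrow> real \<Rightarrow> real \<Rightarrow> real \<Rightarrow> complex" where
  "rho_w q \<alpha> a1 a2 a x =
     exp (\<alpha> * complex_of_real (ln \<bar>x\<bar>))
     * complex_of_real (exp (1/2 * (log q x - 1) * ln x)
        * (qpoch_inf (q * a2 / x) q * qpoch_inf (q * a / x) q) / qpoch_inf (a1 / x) q)"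

text \<open>The Jackson q-integral from a to infinity, int_a^oo f d_{q^-1}x, converges to I:
  (q^-1 - 1) a sum_j q^-j f(q^-j a) sums to I.\<close>
definition has_qint_inf :: "real \<Rightarrow> real \<Rightarrow> (real \<Rightarrow> complex) \<Rightarrow> complex \<Rightarrow> bool" where
  "has_qint_inf q a f I \<longleftrightarrow>
     (\<lambda>j. complex_of_real ((1/q - 1) * a * (1/q) ^ j) * f ((1/q) ^ j * a)) sums I"

end

theory Submission
  imports Defs
begin

text \<open>
  Since \<open>\<sigma>1''(0) = 0\<close>, the operator \<open>y \<mapsto> \<sigma>1 D_(q^-1) D_q y + \<tau> D_q y\<close> maps \<open>x^k\<close> to
  \<open>[k]_q \<tau>'(0) x^k\<close> plus lower powers; these diagonal entries are pairwise distinct, so back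
  substitution yields for every \<open>n\<close> a polynomial of degree \<open>n\<close> with eigenvalue \<open>-\<lambda>_n\<close>.

  On the lattice \<open>x_j = q^-j a\<close> the equation becomes a three-term difference equation
  \<open>A(x)(y(x/q) - y(x)) + B(x)(y(qx) - y(x)) = -\<lambda> y(x)\<close> with \<open>B = \<sigma>2 / ((1-q)^2 x^2)\<close>,
  and the Jackson weights \<open>m_j\<close> of \<open>\<rho>\<close> satisfy the discrete Pearson equation
  \<open>m_(j+1) B(x_(j+1)) = m_j A(x_j)\<close>. As \<open>B(x_0) = 0\<close> (\<open>a\<close> is a zero of \<open>\<sigma>2\<close>), summation by
  parts gives \<open>(\<lambda>_m - \<lambda>_n) \<Sum>_(k\<le>N) m_k P_n(x_k) P_m(x_k) = m_N A(x_N) W_N\<close> with a Wronskian-type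
  \<open>W_N\<close>. The weights decay superexponentially (\<open>m_(j+1)/m_j = O(1/x_j)\<close>) while polynomials
  grow geometrically along the lattice, so the boundary term vanishes in the limit; the norms
  are positive because a nonzero polynomial cannot vanish on the infinite lattice.
\<close>

section \<open>Polynomial solutions\<close>

definition qnat :: "real \<Rightarrow> nat \<Rightarrow> real" where
  "qnat z k = (1 - z ^ k) / (1 - z)"

lemma qnat_inject:
  assumes "0 < q" "q < 1"
  shows "qnat q m = qnat q n \<longleftrightarrow> m = n"
  using assms power_inject_exp'[of q m n] by (auto simp: qnat_def)

lemma qnat_0 [simp]: "qnat z 0 = 0"
  by (simp add: qnat_def)

definition qdiff_poly :: "real \<Rightarrow> real poly \<Rightarrow> real poly" where
  "qdiff_poly z p = Abs_poly (\<lambda>i. if i \<le> degree p then qnat z (Suc i) * coeff p (Suc i) else 0)"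

lemma coeff_qdiff_poly: "coeff (qdiff_poly z p) i = qnat z (Suc i) * coeff p (Suc i)"
  unfolding qdiff_poly_def coeff_Abs_poly_If_le by (auto simp: coeff_eq_0)

lemma degree_qdiff_poly: "degree (qdiff_poly z p) \<le> degree p"
  by (rule degree_le) (auto simp: coeff_qdiff_poly coeff_eq_0)

lemma poly_eq_sum_atMost:
  fixes p :: "'a::comm_semiring_1 poly"
  assumes "degree p \<le> N"
  shows "poly p x = (\<Sum>i\<le>N. coeff p i * x ^ i)"
proof -
  have "(\<Sum>i\<le>N. coeff p i * x ^ i) = (\<Sum>i\<le>degree p. coeff p i * x ^ i)"
    using assms by (intro sum.mono_neutral_right) (auto simp: coeff_eq_0)
  then show ?thesis by (simp add: poly_altdef)
qed

lemma poly_qdiff_poly: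
  assumes "x \<noteq> 0" "z \<noteq> 1"
  shows "poly (qdiff_poly z p) x = (poly p x - poly p (z * x)) / ((1 - z) * x)"
proof -
  let ?N = "Suc (degree p)"
  have "(1 - z) * x * poly (qdiff_poly z p) x
      = (\<Sum>i\<le>degree p. (1 - z) * x * (qnat z (Suc i) * coeff p (Suc i) * x ^ i))"
    by (simp add: poly_eq_sum_atMost[OF degree_qdiff_poly] coeff_qdiff_poly sum_distrib_left)
  also have "\<dots> = (\<Sum>i\<le>degree p. (1 - z ^ Suc i) * coeff p (Suc i) * x ^ Suc i)"
    using assms by (intro sum.cong) (auto simp: qnat_def)
  also have "\<dots> = (\<Sum>i\<le>?N. (1 - z ^ i) * coeff p i * x ^ i)"
    by (subst sum.atMost_Suc_shift) simp
  also have "\<dots> = (\<Sum>i\<le>?N. coeff p i * x ^ i) - (\<Sum>i\<le>?N. coeff p i * (z * x) ^ i)"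
    unfolding sum_subtractf[symmetric]
    by (intro sum.cong refl) (simp add: power_mult_distrib right_diff_distrib mult.commute)
  also have "\<dots> = poly p x - poly p (z * x)"
    using poly_eq_sum_atMost[of p ?N x] poly_eq_sum_atMost[of p ?N "z * x"] by simp
  finally show ?thesis
    using assms by (simp add: field_simps)
qed

lemma qD_poly:
  assumes "z \<noteq> 1"
  shows "qD z (poly p) = poly (qdiff_poly z p)"
proof
  fix x
  show "qD z (poly p) x = poly (qdiff_poly z p) x"
  proof (cases "x = 0")
    case True
    have "deriv (poly p) 0 = coeff p 1"
      by (simp add: DERIV_imp_deriv[OF poly_DERIV] poly_0_coeff_0 coeff_pderiv)
    then show ?thesis
      using True assms by (simp add: qD_def poly_0_coeff_0 coeff_qdiff_poly qnat_def)
  qed (use assms in \<open>simp add: qD_def poly_qdiff_poly\<close>)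
qed

function backward_solution :: "(nat \<Rightarrow> real) \<Rightarrow> (nat \<Rightarrow> real) \<Rightarrow> (nat \<Rightarrow> real) \<Rightarrow> nat \<Rightarrow> nat \<Rightarrow> real" where
  "backward_solution E B G n k =
     (if n < k then 0 else if k = n then 1
      else - (B k * backward_solution E B G n (Suc k) + G k * backward_solution E B G n (Suc (Suc k))) / E k)"
  by auto
termination by (relation "Wellfounded.measure (\<lambda>(E, B, G, n, k). Suc n - k)") auto

lemma backward_solution_above: "n < k \<Longrightarrow> backward_solution E B G n k = 0"
  and backward_solution_top: "backward_solution E B G n n = 1"
  and backward_solution_below: "k < n \<Longrightarrow> backward_solution E B G n k =
     - (B k * backward_solution E B G n (Suc k) + G k * backward_solution E B G n (Suc (Suc k))) / E k"
  by (subst backward_solution.simps; simp)+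

declare backward_solution.simps [simp del]

lemma exists_poly_three_term_recurrence:
  fixes E B G :: "nat \<Rightarrow> real"
  assumes "\<And>k. k < n \<Longrightarrow> E k \<noteq> 0"
  shows "\<exists>p. degree p = n \<and> coeff p n = 1 \<and>
           (\<forall>k<n. E k * coeff p k + B k * coeff p (Suc k) + G k * coeff p (Suc (Suc k)) = 0)"
proof -
  let ?c = "backward_solution E B G n"
  have c: "coeff (Abs_poly ?c) = ?c"
    by (rule coeff_Abs_poly[of n]) (simp add: backward_solution_above)
  have "degree (Abs_poly ?c) = n"
    by (intro antisym degree_le le_degree) (auto simp: c backward_solution_above backward_solution_top)
  moreover have "E k * ?c k + B k * ?c (Suc k) + G k * ?c (Suc (Suc k)) = 0" if "k < n" for k
    using assms[OF that] by (simp add: backward_solution_below[OF that] field_simps)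
  ultimately show ?thesis using c backward_solution_top by auto
qed

definition qEHT_poly_op :: "real \<Rightarrow> real poly \<Rightarrow> real poly \<Rightarrow> real \<Rightarrow> real poly \<Rightarrow> real poly" where
  "qEHT_poly_op q \<sigma>1 \<tau> lam p =
     \<sigma>1 * qdiff_poly (1/q) (qdiff_poly q p) + \<tau> * qdiff_poly q p + smult lam p"

lemma qEHT_poly_iff:
  assumes "0 < q" "q \<noteq> 1"
  shows "qEHT q \<sigma>1 \<tau> n (poly p) \<longleftrightarrow> qEHT_poly_op q \<sigma>1 \<tau> (qlambda q \<sigma>1 \<tau> n) p = 0"
  using assms by (simp add: qEHT_def qEHT_poly_op_def qD_poly poly_all_0_iff_0[symmetric])

lemma coeff_linear_mult:
  "coeff ([:c0, c1:] * p) k = c0 * coeff p k + (if k = 0 then 0 else c1 * coeff p (k - 1))"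
  by (cases k) (simp_all add: coeff_pCons)

lemma coeff_qEHT_poly_op_linear:
  "coeff (qEHT_poly_op q (smult s1 [:- a1, 1:]) [:t0, t1:] lam p) k =
     (t1 * qnat q k + lam) * coeff p k
     + (s1 * qnat (1/q) k + t0) * qnat q (Suc k) * coeff p (Suc k)
     - s1 * a1 * qnat (1/q) (Suc k) * qnat q (Suc (Suc k)) * coeff p (Suc (Suc k))"
  by (cases k) (simp_all add: qEHT_poly_op_def coeff_linear_mult coeff_qdiff_poly algebra_simps)

lemma qlambda_linear: "qlambda q (smult s1 [:- a1, 1:]) [:t0, t1:] n = - qnat q n * t1"
  by (simp add: qlambda_def qnum_def qnat_def pderiv_pCons)

lemma exists_poly_solution_qEHT_linear:
  assumes "0 < q" "q < 1" "t1 \<noteq> 0"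
  shows "\<exists>P. degree P = n \<and> P \<noteq> 0 \<and> qEHT q (smult s1 [:- a1, 1:]) [:t0, t1:] n (poly P)"
proof -
  define E where "E k = t1 * (qnat q k - qnat q n)" for k
  have "E k \<noteq> 0" if "k < n" for k
    using that assms qnat_inject[of q k n] by (simp add: E_def)
  then obtain P where P: "degree P = n" "coeff P n = 1"
    and rec: "\<And>k. k < n \<Longrightarrow> E k * coeff P k + (s1 * qnat (1/q) k + t0) * qnat q (Suc k) * coeff P (Suc k)
        - s1 * a1 * qnat (1/q) (Suc k) * qnat q (Suc (Suc k)) * coeff P (Suc (Suc k)) = 0"
    using exists_poly_three_term_recurrence[of n E "\<lambda>k. (s1 * qnat (1/q) k + t0) * qnat q (Suc k)"
        "\<lambda>k. - s1 * a1 * qnat (1/q) (Suc k) * qnat q (Suc (Suc k))"] by auto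
  have op: "qEHT_poly_op q (smult s1 [:- a1, 1:]) [:t0, t1:] (- qnat q n * t1) P = 0"
  proof (rule poly_eqI)
    fix k
    show "coeff (qEHT_poly_op q (smult s1 [:- a1, 1:]) [:t0, t1:] (- qnat q n * t1) P) k = coeff 0 k"
    proof (cases "k < n")
      case True
      then show ?thesis
        unfolding coeff_qEHT_poly_op_linear using rec[OF True] by (simp add: E_def algebra_simps)
    next
      case False
      then consider "k = n" | "n < k" by linarith
      then show ?thesis
        unfolding coeff_qEHT_poly_op_linear using P by cases (auto simp: coeff_eq_0 algebra_simps)
    qed
  qed
  have "qEHT q (smult s1 [:- a1, 1:]) [:t0, t1:] n (poly P)"
    unfolding qEHT_poly_iff[OF assms(1) less_imp_neq[OF assms(2)]] qlambda_linear using op .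
  then show ?thesis
    using P by auto
qed

section \<open>Jackson weights on the lattice \<open>q^-j a\<close>\<close>

lemma qpoch_inf_has_prod:
  assumes "0 < q" "q < 1"
  shows "(\<lambda>k. 1 - \<beta> * q ^ k) has_prod qpoch_inf \<beta> q"
proof -
  have "summable (\<lambda>k. \<bar>\<beta>\<bar> * q ^ k)"
    using assms by (intro summable_mult summable_geometric) auto
  then have "summable (\<lambda>k. norm ((1 - \<beta> * q ^ k) - 1))"
    using assms by (simp add: abs_mult)
  then show ?thesis
    unfolding qpoch_inf_def
    by (intro convergent_prod_has_prod abs_convergent_prod_imp_convergent_prod
        summable_imp_abs_convergent_prod)
qed

lemma qpoch_inf_pos:
  assumes "0 < q" "q < 1" "\<beta> < 1"
  shows "0 < qpoch_inf \<beta> q"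
proof (rule has_prod_pos[OF qpoch_inf_has_prod[OF assms(1,2)]])
  fix k
  have "\<beta> * q ^ k < 1"
  proof (cases "\<beta> \<le> 0")
    case False
    then have "\<beta> * q ^ k \<le> \<beta>"
      using assms by (simp add: mult_left_le power_le_one)
    then show ?thesis using assms by simp
  qed (use assms mult_nonpos_nonneg[of \<beta> "q ^ k"] in simp)
  then show "0 < 1 - \<beta> * q ^ k" by simp
qed

lemma qpoch_inf_shift:
  assumes "0 < q" "q < 1" "\<beta> \<noteq> 1"
  shows "qpoch_inf (\<beta> * q) q = qpoch_inf \<beta> q / (1 - \<beta>)"
proof -
  have "(\<lambda>k. 1 - \<beta> * q ^ Suc k) has_prod qpoch_inf (\<beta> * q) q"
    using qpoch_inf_has_prod[OF assms(1,2), of "\<beta> * q"] by (simp add: mult_ac)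
  then have "(\<lambda>k. 1 - \<beta> * q ^ k) has_prod (qpoch_inf (\<beta> * q) q * (1 - \<beta>))"
    using has_prod_Suc_iff[of "\<lambda>k. 1 - \<beta> * q ^ k"] assms by simp
  then show ?thesis
    using has_prod_unique2[OF qpoch_inf_has_prod[OF assms(1,2)]] assms(3) by (simp add: eq_divide_eq)
qed

definition gauss_factor :: "real \<Rightarrow> real \<Rightarrow> real" where
  "gauss_factor q x = exp (1/2 * (log q x - 1) * ln x)"

lemma gauss_factor_shift:
  assumes "0 < q" "q \<noteq> 1" "0 < x"
  shows "gauss_factor q (x / q) = q / x * gauss_factor q x"
proof -
  have "1/2 * (log q (x / q) - 1) * ln (x / q) = 1/2 * (log q x - 1) * ln x + (ln q - ln x)"
    using assms by (simp add: log_def ln_div field_simps)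
  then have "gauss_factor q (x / q) = gauss_factor q x * exp (ln q - ln x)"
    unfolding gauss_factor_def by (simp only: exp_add)
  then show ?thesis
    using assms by (simp add: exp_diff)
qed

locale jackson_lattice =
  fixes q s1 a1 t1 a2 a :: real
  assumes q_pos: "0 < q" and q_less_1: "q < 1" and s1_nonzero: "s1 \<noteq> 0" and t1_nonzero: "t1 \<noteq> 0"
    and t1_s1_neg: "t1 / s1 < 0" and a2_neg: "a2 < 0" and a1_pos: "0 < a1" and a1_less: "a1 < a"
begin

definition kappa :: real where
  "kappa = q^2 * s1 / ((q - 1) * t1)"

definition node :: "nat \<Rightarrow> real" where
  "node j = (1/q) ^ j * a"

text \<open>\<open>weight j\<close> is the \<open>j\<close>-th term of the Jackson sum of \<open>\<rho>\<close> divided by \<open>a^\<alpha>\<close>, since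
  \<open>|x_j|^\<alpha> = a^\<alpha> (q^-\<alpha>)^j = a^\<alpha> kappa^j\<close>.\<close>

definition weight :: "nat \<Rightarrow> real" where
  "weight j = (1/q - 1) * a * (1/q) ^ j * kappa ^ j * gauss_factor q (node j)
     * (qpoch_inf (q * a2 / node j) q * qpoch_inf (q * a / node j) q) / qpoch_inf (a1 / node j) q"

definition weight_ratio :: "real \<Rightarrow> real" where
  "weight_ratio x = kappa * (x - a1) / ((x - q * a2) * (x - q * a))"

lemma a_pos: "0 < a"
  using a1_pos a1_less by simp

lemma kappa_pos: "0 < kappa"
proof -
  have "0 < (q - 1) * (t1 / s1)"
    using t1_s1_neg q_less_1 by (intro mult_neg_neg) auto
  moreover have "kappa = q^2 / ((q - 1) * (t1 / s1))"
    using s1_nonzero by (simp add: kappa_def)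
  ultimately show ?thesis
    using q_pos by (metis divide_pos_pos zero_less_power)
qed

lemma node_ge: "a \<le> node j"
  using q_pos q_less_1 a_pos by (simp add: node_def one_le_power mult_le_cancel_right1)

lemma node_pos: "0 < node j"
  using a_pos node_ge by (rule less_le_trans)

lemma node_Suc: "node (Suc j) = node j / q"
  by (simp add: node_def)

lemma node_eventually_ge: "\<forall>\<^sub>F j in sequentially. X \<le> node j"
proof -
  obtain N where N: "X / a < (1/q) ^ N"
    using real_arch_pow[of "1/q" "X / a"] q_pos q_less_1 by auto
  have "X \<le> node j" if "N \<le> j" for j
  proof -
    have "(1/q) ^ N \<le> (1/q) ^ j"
      using that q_pos q_less_1 by (intro power_increasing) auto
    then have "X / a \<le> (1/q) ^ j"
      using N by linarith
    then show ?thesis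
      using a_pos by (simp add: node_def pos_divide_le_eq)
  qed
  then show ?thesis
    unfolding eventually_sequentially by blast
qed

lemma node_inj: "inj node"
proof (rule injI)
  fix i j
  assume "node i = node j"
  then have "(1/q) ^ i = (1/q) ^ j"
    using a_pos by (simp add: node_def)
  then show "i = j"
    using q_pos q_less_1 by simp
qed

lemma qpoch_args_at_node:
  "q * a2 / node j < 1" "q * a / node j < 1" "a1 / node j < 1"
proof -
  have "q * a2 < 0" using q_pos a2_neg by (simp add: mult_pos_neg)
  then show "q * a2 / node j < 1"
    using node_pos[of j] by (smt (verit) divide_neg_pos)
  have "q * a / node j \<le> q * a / a"
    using node_ge node_pos q_pos a_pos by (intro divide_left_mono) auto
  then show "q * a / node j < 1"
    using a_pos q_less_1 by simp
  have "a1 / node j \<le> a1 / a"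
    using node_ge node_pos a1_pos a_pos by (intro divide_left_mono) auto
  moreover have "a1 / a < 1"
    using a1_less a_pos by simp
  ultimately show "a1 / node j < 1"
    by linarith
qed

lemma weight_pos: "0 < weight j"
  using qpoch_args_at_node[of j] q_pos q_less_1 kappa_pos a_pos unfolding weight_def gauss_factor_def
  by (intro mult_pos_pos divide_pos_pos qpoch_inf_pos) auto

lemma weight_Suc: "weight (Suc j) = weight j * weight_ratio (node j)"
proof -
  define x where "x = node j"
  define u v w where "u = q * a2 / x" and "v = q * a / x" and "w = a1 / x"
  define C where "C = (1/q - 1) * a * (1/q) ^ j * kappa ^ j"
  define G where "G = gauss_factor q x"
  define P1 P2 P3 where "P1 = qpoch_inf u q" and "P2 = qpoch_inf v q" and "P3 = qpoch_inf w q"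
  have uvw: "u < 1" "v < 1" "w < 1" "0 < P3"
    using qpoch_args_at_node[of j] q_pos q_less_1
    by (simp_all add: u_def v_def w_def P3_def x_def qpoch_inf_pos)
  have shift: "qpoch_inf (c / (x / q)) q = qpoch_inf (c / x) q / (1 - c / x)" if "c / x < 1" for c
  proof -
    have "c / (x / q) = c / x * q"
      using q_pos by simp
    moreover have "c / x \<noteq> 1"
      using that by linarith
    ultimately show ?thesis
      using qpoch_inf_shift[OF q_pos q_less_1] by presburger
  qed
  have "weight (Suc j) = C * (1/q) * kappa * (q / x * G) * ((P1 / (1 - u)) * (P2 / (1 - v))) / (P3 / (1 - w))"
    unfolding weight_def node_Suc x_def[symmetric]
      gauss_factor_shift[OF q_pos less_imp_neq[OF q_less_1] node_pos[of j, folded x_def]]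
      shift[OF uvw(1)[unfolded u_def]] shift[OF uvw(2)[unfolded v_def]] shift[OF uvw(3)[unfolded w_def]]
    by (simp add: C_def G_def P1_def P2_def P3_def u_def v_def w_def mult_ac)
  also have "\<dots> = C * (G * (P1 * P2) / P3) * ((1/q) * kappa * (q / x) * (1 - w) / ((1 - u) * (1 - v)))"
    using uvw by (simp add: field_simps)
  also have "C * (G * (P1 * P2) / P3) = weight j"
    by (simp add: weight_def C_def G_def P1_def P2_def P3_def u_def v_def w_def x_def)
  also have "(1/q) * kappa * (q / x) * (1 - w) / ((1 - u) * (1 - v)) = weight_ratio x"
  proof -
    have x: "0 < x" "x - q * a2 \<noteq> 0" "x - q * a \<noteq> 0"
      using uvw node_pos[of j] by (auto simp: u_def v_def x_def)
    then have eqs: "1 - w = (x - a1) / x" "1 - u = (x - q * a2) / x" "1 - v = (x - q * a) / x"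
      by (simp_all add: u_def v_def w_def field_simps)
    show ?thesis
      unfolding eqs weight_ratio_def using x q_pos by (simp add: divide_simps)
  qed
  finally show ?thesis
    by (simp add: x_def)
qed

lemma weight_ratio_le:
  assumes "a \<le> x"
  shows "weight_ratio x \<le> kappa / ((1 - q) * x)"
proof -
  have x: "0 < x" using assms a_pos by simp
  have "x \<le> x - q * a2"
    using q_pos a2_neg mult_pos_neg[of q a2] by simp
  moreover have "(1 - q) * x \<le> x - q * a"
    using assms q_pos by (simp add: algebra_simps)
  ultimately have "x * ((1 - q) * x) \<le> (x - q * a2) * (x - q * a)"
    using x q_less_1 by (intro mult_mono) auto
  moreover have "0 < x * ((1 - q) * x)"
    using x q_less_1 by simp
  ultimately have "(x - a1) / ((x - q * a2) * (x - q * a)) \<le> x / (x * ((1 - q) * x))"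
    using x a1_pos by (intro frac_le) auto
  then have "kappa * ((x - a1) / ((x - q * a2) * (x - q * a))) \<le> kappa * (x / (x * ((1 - q) * x)))"
    using kappa_pos by (intro mult_left_mono) auto
  then show ?thesis
    using x by (simp add: weight_ratio_def)
qed

lemma summable_weight_geometric:
  assumes "0 < \<theta>"
  shows "summable (\<lambda>j. weight j * \<theta> ^ j)"
proof -
  obtain N where N: "\<And>j. N \<le> j \<Longrightarrow> 2 * kappa * \<theta> / (1 - q) \<le> node j"
    using node_eventually_ge unfolding eventually_sequentially by blast
  show ?thesis
  proof (rule summable_ratio_test[of "1/2" N])
    fix j
    assume "N \<le> j"
    have "weight_ratio (node j) * \<theta> \<le> kappa / ((1 - q) * node j) * \<theta>"
      using weight_ratio_le[OF node_ge] assms by (intro mult_right_mono) auto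
    also have "\<dots> \<le> 1/2"
      using N[OF \<open>N \<le> j\<close>] node_pos[of j] q_less_1 kappa_pos assms by (simp add: field_simps)
    finally have "weight_ratio (node j) * \<theta> \<le> 1/2" .
    then have "weight j * \<theta> ^ j * (weight_ratio (node j) * \<theta>) \<le> weight j * \<theta> ^ j * (1/2)"
      using weight_pos[of j] assms by (intro mult_left_mono) auto
    moreover have "0 < weight_ratio (node j)"
      using weight_pos[of "Suc j"] weight_pos[of j] by (simp add: weight_Suc zero_less_mult_iff)
    ultimately show "norm (weight (Suc j) * \<theta> ^ Suc j) \<le> 1/2 * norm (weight j * \<theta> ^ j)"
      using weight_pos[of j] assms by (simp add: weight_Suc abs_mult mult_ac)
  qed simp
qed

lemma poly_node_bound: "\<exists>M. \<forall>j. \<bar>poly p (node j)\<bar> \<le> M * ((1/q) ^ degree p) ^ j"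
proof (intro exI allI)
  fix j
  have "\<bar>poly p (node j)\<bar> \<le> (\<Sum>i\<le>degree p. \<bar>coeff p i\<bar> * node j ^ i)"
    using node_pos[of j] by (simp add: poly_altdef sum_abs[THEN order_trans] abs_mult power_abs)
  also have "\<dots> \<le> (\<Sum>i\<le>degree p. \<bar>coeff p i\<bar> * a ^ i * ((1/q) ^ degree p) ^ j)"
  proof (intro sum_mono)
    fix i
    assume "i \<in> {..degree p}"
    then have "((1/q) ^ i) ^ j \<le> ((1/q) ^ degree p) ^ j"
      using q_pos q_less_1 by (intro power_mono power_increasing) auto
    then have "node j ^ i \<le> a ^ i * ((1/q) ^ degree p) ^ j"
      using a_pos by (simp add: node_def power_mult_distrib flip: power_mult)
        (simp add: power_mult mult.commute[of i j] mult_left_mono)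
    then show "\<bar>coeff p i\<bar> * node j ^ i \<le> \<bar>coeff p i\<bar> * a ^ i * ((1/q) ^ degree p) ^ j"
      by (simp add: mult_left_mono mult.assoc)
  qed
  finally show "\<bar>poly p (node j)\<bar> \<le> (\<Sum>i\<le>degree p. \<bar>coeff p i\<bar> * a ^ i) * ((1/q) ^ degree p) ^ j"
    by (simp add: sum_distrib_right)
qed

lemma weight_poly_square_sums_pos:
  assumes "p \<noteq> 0"
  shows "\<exists>S>0. (\<lambda>j. weight j * (poly p (node j) * poly p (node j))) sums S"
proof -
  obtain M where M: "\<And>j. \<bar>poly p (node j)\<bar> \<le> M * ((1/q) ^ degree p) ^ j"
    using poly_node_bound by blast
  define \<theta> where "\<theta> = ((1/q) ^ degree p)^2"
  have "0 < \<theta>" using q_pos by (simp add: \<theta>_def)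
  have "summable (\<lambda>j. weight j * (poly p (node j) * poly p (node j)))"
  proof (rule summable_comparison_test')
    show "summable (\<lambda>j. M^2 * (weight j * \<theta> ^ j))"
      using \<open>0 < \<theta>\<close> by (intro summable_mult summable_weight_geometric)
    fix j
    have "\<bar>poly p (node j)\<bar> * \<bar>poly p (node j)\<bar> \<le> (M * ((1/q) ^ degree p) ^ j) * (M * ((1/q) ^ degree p) ^ j)"
      using M[of j] by (intro mult_mono) auto
    then show "norm (weight j * (poly p (node j) * poly p (node j))) \<le> M^2 * (weight j * \<theta> ^ j)"
      using weight_pos[of j]
      by (simp add: abs_mult \<theta>_def power2_eq_square power_mult_distrib mult_ac mult_left_mono)
  qed
  moreover obtain j where "poly p (node j) \<noteq> 0"
  proof -
    have "\<not> range node \<subseteq> {x. poly p x = 0}"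
      using poly_roots_finite[OF assms] range_inj_infinite[OF node_inj] finite_subset by blast
    then show ?thesis using that by blast
  qed
  then have "0 < weight j * (poly p (node j) * poly p (node j))"
    using weight_pos[of j] by (metis mult_pos_pos not_real_square_gt_zero)
  moreover have "0 \<le> weight i * (poly p (node i) * poly p (node i))" for i
    using weight_pos[of i] by simp
  ultimately have "0 < suminf (\<lambda>j. weight j * (poly p (node j) * poly p (node j)))"
    by (intro suminf_pos2)
  then show ?thesis
    using \<open>summable _\<close> summable_sums by blast
qed

lemma jackson_term_at_node:
  assumes "exp (\<alpha> * complex_of_real (ln q)) = complex_of_real (1 / kappa)"
  shows "complex_of_real ((1/q - 1) * a * (1/q) ^ j) * (complex_of_real F * rho_w q \<alpha> a1 a2 a (node j))
     = exp (\<alpha> * complex_of_real (ln a)) * complex_of_real (weight j * F)"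
proof -
  have ln_node: "ln \<bar>node j\<bar> = ln a - real j * ln q"
    using node_pos a_pos q_pos by (simp add: node_def ln_mult ln_realpow ln_div)
  have "\<alpha> * complex_of_real (ln \<bar>node j\<bar>)
      = \<alpha> * complex_of_real (ln a) - of_nat j * (\<alpha> * complex_of_real (ln q))"
    unfolding ln_node by (simp add: algebra_simps)
  then have "exp (\<alpha> * complex_of_real (ln \<bar>node j\<bar>))
      = exp (\<alpha> * complex_of_real (ln a)) / exp (\<alpha> * complex_of_real (ln q)) ^ j"
    by (simp add: exp_diff exp_of_nat_mult)
  also have "\<dots> = exp (\<alpha> * complex_of_real (ln a)) * complex_of_real (kappa ^ j)"
    using kappa_pos by (simp add: assms field_simps)
  finally show ?thesis
    by (simp add: rho_w_def weight_def gauss_factor_def mult_ac)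
qed

lemma has_qint_inf_of_weight_sums:
  assumes "exp (\<alpha> * complex_of_real (ln q)) = complex_of_real (1 / kappa)"
    and "(\<lambda>j. weight j * f (node j)) sums s"
  shows "has_qint_inf q a (\<lambda>x. complex_of_real (f x) * rho_w q \<alpha> a1 a2 a x)
           (exp (\<alpha> * complex_of_real (ln a)) * complex_of_real s)"
proof -
  have "(\<lambda>j. exp (\<alpha> * complex_of_real (ln a)) * complex_of_real (weight j * f (node j)))
      sums (exp (\<alpha> * complex_of_real (ln a)) * complex_of_real s)"
    using assms(2) by (intro sums_mult) (simp only: sums_of_real_iff)
  then show ?thesis
    unfolding has_qint_inf_def node_def[symmetric] jackson_term_at_node[OF assms(1)] .
qed

end

section \<open>Orthogonality\<close>

lemma qD_qD_as_differences:
  fixes y :: "real \<Rightarrow> real"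
  assumes "0 < q" "q \<noteq> 1" "x \<noteq> 0"
  shows "S * qD (1/q) (qD q y) x + T * qD q y x =
     q^2 * S / ((1 - q)^2 * x^2) * (y (x / q) - y x)
     + q * (S + (1 - 1/q) * x * T) / ((1 - q)^2 * x^2) * (y (q * x) - y x)"
proof -
  define h where "h = (1 - q) * x"
  have h: "h \<noteq> 0" "(1 - q)^2 * x^2 = h^2" "(1 - 1/q) * x = - h / q"
    using assms by (auto simp: h_def field_simps power2_eq_square)
  have D2: "qD (1/q) (qD q y) x = - q * (qD q y x - qD q y (x / q)) / h"
    using assms h by (simp add: qD_def)
  have D1: "qD q y x = (y x - y (q * x)) / h" "qD q y (x / q) = q * (y (x / q) - y x) / h"
    using assms by (simp_all add: qD_def h_def field_simps)
  show ?thesis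
    unfolding D2 D1 h(2,3) using assms h(1) by (simp add: field_simps power2_eq_square)
qed

text \<open>At \<open>k = 0\<close> the term \<open>Y (k - 1)\<close> is \<open>Y 0\<close> (truncated subtraction); it is harmless because
  its coefficient \<open>B 0\<close> vanishes, and that vanishing is what leaves a single boundary term.\<close>

lemma weighted_product_sum_eigen:
  fixes m A B Y Z :: "nat \<Rightarrow> real"
  assumes B0: "B 0 = 0" and pearson: "\<And>k. m (Suc k) * B (Suc k) = m k * A k"
    and Y: "\<And>k. A k * (Y (Suc k) - Y k) + B k * (Y (k - 1) - Y k) = - ly * Y k"
    and Z: "\<And>k. A k * (Z (Suc k) - Z k) + B k * (Z (k - 1) - Z k) = - lz * Z k"
  shows "(lz - ly) * (\<Sum>k<Suc N. m k * (Y k * Z k)) = m N * A N * (Y (Suc N) * Z N - Z (Suc N) * Y N)"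
proof (induction N)
  case 0
  show ?case
    using Y[of 0] Z[of 0] B0 by simp algebra
next
  case (Suc N)
  have "A (Suc N) * (Y (Suc (Suc N)) - Y (Suc N)) + B (Suc N) * (Y N - Y (Suc N)) = - ly * Y (Suc N)"
    "A (Suc N) * (Z (Suc (Suc N)) - Z (Suc N)) + B (Suc N) * (Z N - Z (Suc N)) = - lz * Z (Suc N)"
    using Y[of "Suc N"] Z[of "Suc N"] by simp_all
  with Suc.IH pearson[of N] show ?case
    by (simp only: sum.lessThan_Suc) algebra
qed

locale qEHT_lattice = jackson_lattice +
  fixes t0 :: real
  assumes sigma2_factor:
    "\<And>x. q * (s1 * (x - a1) + (1 - 1/q) * x * (t0 + t1 * x)) = (q - 1) * t1 * (x - a2) * (x - a)"
begin

definition coef_up :: "real \<Rightarrow> real" where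
  "coef_up x = q^2 * s1 * (x - a1) / ((1 - q)^2 * x^2)"

definition coef_down :: "real \<Rightarrow> real" where
  "coef_down x = (q - 1) * t1 * (x - a2) * (x - a) / ((1 - q)^2 * x^2)"

lemma qEHT_as_difference_equation:
  assumes "qEHT q (smult s1 [:- a1, 1:]) [:t0, t1:] n y" "x \<noteq> 0"
  shows "coef_up x * (y (x / q) - y x) + coef_down x * (y (q * x) - y x)
           = - qlambda q (smult s1 [:- a1, 1:]) [:t0, t1:] n * y x"
proof -
  let ?lam = "qlambda q (smult s1 [:- a1, 1:]) [:t0, t1:] n"
  have "poly (smult s1 [:- a1, 1:]) x * qD (1/q) (qD q y) x + poly [:t0, t1:] x * qD q y x + ?lam * y x = 0"
    using assms(1) unfolding qEHT_def by blast
  then have "s1 * (x - a1) * qD (1/q) (qD q y) x + (t0 + t1 * x) * qD q y x = - ?lam * y x"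
    by (simp add: algebra_simps)
  then show ?thesis
    using qD_qD_as_differences[OF q_pos less_imp_neq[OF q_less_1] assms(2), of "s1 * (x - a1)" y "t0 + t1 * x"]
    unfolding sigma2_factor coef_up_def coef_down_def by (simp add: mult.assoc)
qed

lemma coef_down_node_0: "coef_down (node 0) = 0"
  by (simp add: coef_down_def node_def)

lemma weight_pearson: "weight (Suc j) * coef_down (node (Suc j)) = weight j * coef_up (node j)"
proof -
  define x where "x = node j"
  have x: "0 < x" "x - q * a2 \<noteq> 0" "x - q * a \<noteq> 0"
    using qpoch_args_at_node[of j] node_pos[of j] by (auto simp: x_def)
  have "x / q - a2 = (x - q * a2) / q" "x / q - a = (x - q * a) / q"
    using q_pos by (simp_all add: field_simps)
  then have "weight_ratio x * coef_down (x / q) = coef_up x"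
    unfolding weight_ratio_def coef_down_def coef_up_def kappa_def
    using x q_pos q_less_1 t1_nonzero by (simp add: divide_simps power2_eq_square ac_simps)
  then show ?thesis
    by (simp add: weight_Suc node_Suc x_def mult.assoc)
qed

lemma coef_up_bound:
  assumes "a \<le> x"
  shows "\<bar>coef_up x\<bar> \<le> q^2 * \<bar>s1\<bar> / ((1 - q)^2 * a)"
proof -
  have x: "0 < x" using assms a_pos by simp
  have "\<bar>coef_up x\<bar> = q^2 * \<bar>s1\<bar> / (1 - q)^2 * ((x - a1) / x^2)"
    using assms a1_less by (simp add: coef_up_def abs_mult)
  also have "\<dots> \<le> q^2 * \<bar>s1\<bar> / (1 - q)^2 * (x / (a * x))"
    using x a1_pos assms a_pos
    by (intro mult_left_mono frac_le) (auto simp: power2_eq_square intro: mult_right_mono)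
  also have "\<dots> = q^2 * \<bar>s1\<bar> / ((1 - q)^2 * a)"
    using x by simp
  finally show ?thesis .
qed

lemma qEHT_at_nodes:
  assumes "qEHT q (smult s1 [:- a1, 1:]) [:t0, t1:] n y"
  shows "coef_up (node k) * (y (node (Suc k)) - y (node k)) + coef_down (node k) * (y (node (k - 1)) - y (node k))
           = - qlambda q (smult s1 [:- a1, 1:]) [:t0, t1:] n * y (node k)"
proof -
  have eq: "coef_up (node k) * (y (node (Suc k)) - y (node k)) + coef_down (node k) * (y (q * node k) - y (node k))
           = - qlambda q (smult s1 [:- a1, 1:]) [:t0, t1:] n * y (node k)"
    using qEHT_as_difference_equation[OF assms, of "node k"] node_pos[of k] by (simp add: node_Suc)
  show ?thesis
  proof (cases k)
    case 0
    then show ?thesis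
      using eq by (simp add: coef_down_node_0)
  next
    case (Suc i)
    then show ?thesis
      using eq q_pos by (simp add: node_Suc)
  qed
qed

lemma boundary_term_tendsto_zero:
  fixes Y Z :: "nat \<Rightarrow> real"
  assumes Y: "\<And>j. \<bar>Y j\<bar> \<le> M1 * \<theta>1 ^ j" and Z: "\<And>j. \<bar>Z j\<bar> \<le> M2 * \<theta>2 ^ j"
    and "0 < \<theta>1" "0 < \<theta>2"
  shows "(\<lambda>N. weight N * coef_up (node N) * (Y (Suc N) * Z N - Z (Suc N) * Y N)) \<longlonglongrightarrow> 0"
proof (rule Lim_null_comparison)
  define C where "C = q^2 * \<bar>s1\<bar> / ((1 - q)^2 * a) * (M1 * M2 * (\<theta>1 + \<theta>2))"
  have "(\<lambda>N. weight N * (\<theta>1 * \<theta>2) ^ N) \<longlonglongrightarrow> 0"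
    using assms by (intro summable_LIMSEQ_zero summable_weight_geometric) simp
  then show "(\<lambda>N. C * (weight N * (\<theta>1 * \<theta>2) ^ N)) \<longlonglongrightarrow> 0"
    by (rule tendsto_mult_right_zero)
  have M: "0 \<le> M1" "0 \<le> M2"
    using Y[of 0] Z[of 0] by simp_all
  show "\<forall>\<^sub>F N in sequentially. norm (weight N * coef_up (node N) * (Y (Suc N) * Z N - Z (Suc N) * Y N))
          \<le> C * (weight N * (\<theta>1 * \<theta>2) ^ N)"
  proof (intro always_eventually allI)
    fix N
    have "\<bar>Y (Suc N) * Z N - Z (Suc N) * Y N\<bar> \<le> \<bar>Y (Suc N)\<bar> * \<bar>Z N\<bar> + \<bar>Z (Suc N)\<bar> * \<bar>Y N\<bar>"
      by (metis abs_mult abs_triangle_ineq4)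
    also have "\<dots> \<le> (M1 * \<theta>1 ^ Suc N) * (M2 * \<theta>2 ^ N) + (M2 * \<theta>2 ^ Suc N) * (M1 * \<theta>1 ^ N)"
      using Y[of "Suc N"] Y[of N] Z[of "Suc N"] Z[of N] M assms(3,4)
      by (intro add_mono mult_mono) (auto simp del: power_Suc)
    also have "\<dots> = M1 * M2 * (\<theta>1 + \<theta>2) * (\<theta>1 * \<theta>2) ^ N"
      by (simp add: algebra_simps power_mult_distrib)
    finally have "\<bar>Y (Suc N) * Z N - Z (Suc N) * Y N\<bar> \<le> M1 * M2 * (\<theta>1 + \<theta>2) * (\<theta>1 * \<theta>2) ^ N" .
    then have "\<bar>coef_up (node N)\<bar> * \<bar>Y (Suc N) * Z N - Z (Suc N) * Y N\<bar>
        \<le> q^2 * \<bar>s1\<bar> / ((1 - q)^2 * a) * (M1 * M2 * (\<theta>1 + \<theta>2) * (\<theta>1 * \<theta>2) ^ N)"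
      using coef_up_bound[OF node_ge] a_pos by (intro mult_mono) auto
    then have "weight N * (\<bar>coef_up (node N)\<bar> * \<bar>Y (Suc N) * Z N - Z (Suc N) * Y N\<bar>)
        \<le> weight N * (q^2 * \<bar>s1\<bar> / ((1 - q)^2 * a) * (M1 * M2 * (\<theta>1 + \<theta>2) * (\<theta>1 * \<theta>2) ^ N))"
      using weight_pos[of N] by (intro mult_left_mono) auto
    then show "norm (weight N * coef_up (node N) * (Y (Suc N) * Z N - Z (Suc N) * Y N))
          \<le> C * (weight N * (\<theta>1 * \<theta>2) ^ N)"
      using weight_pos[of N] by (simp add: C_def abs_mult mult_ac)
  qed
qed

lemma qEHT_poly_orthogonal:
  assumes P: "qEHT q (smult s1 [:- a1, 1:]) [:t0, t1:] n (poly P)"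
    and R: "qEHT q (smult s1 [:- a1, 1:]) [:t0, t1:] m (poly R)"
    and "m \<noteq> n"
  shows "(\<lambda>j. weight j * (poly P (node j) * poly R (node j))) sums 0"
proof -
  let ?lam = "qlambda q (smult s1 [:- a1, 1:]) [:t0, t1:]"
  define Y Z where "Y j = poly P (node j)" and "Z j = poly R (node j)" for j
  have "?lam m \<noteq> ?lam n"
    unfolding qlambda_linear using \<open>m \<noteq> n\<close> qnat_inject[OF q_pos q_less_1] t1_nonzero by simp
  define bd where "bd N = weight N * coef_up (node N) * (Y (Suc N) * Z N - Z (Suc N) * Y N)" for N
  obtain M1 M2 where "\<And>j. \<bar>Y j\<bar> \<le> M1 * ((1/q) ^ degree P) ^ j" "\<And>j. \<bar>Z j\<bar> \<le> M2 * ((1/q) ^ degree R) ^ j"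
    unfolding Y_def Z_def using poly_node_bound by metis
  from boundary_term_tendsto_zero[OF this]
  have "bd \<longlonglongrightarrow> 0"
    using q_pos by (simp add: bd_def[abs_def])
  moreover have "(?lam m - ?lam n) * (\<Sum>k<Suc N. weight k * (Y k * Z k)) = bd N" for N
    using coef_down_node_0 weight_pearson qEHT_at_nodes[OF P] qEHT_at_nodes[OF R] unfolding Y_def Z_def bd_def
    by (rule weighted_product_sum_eigen)
  then have "(\<lambda>N. \<Sum>k<Suc N. weight k * (Y k * Z k)) = (\<lambda>N. bd N / (?lam m - ?lam n))"
    using \<open>?lam m \<noteq> ?lam n\<close> by (simp add: fun_eq_iff eq_divide_eq mult.commute)
  ultimately have "(\<lambda>N. \<Sum>k<Suc N. weight k * (Y k * Z k)) \<longlonglongrightarrow> 0"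
    by (simp add: tendsto_divide_zero)
  then show ?thesis
    unfolding sums_def Y_def Z_def by (rule LIMSEQ_imp_Suc)
qed

lemma qEHT_polys_orthogonal_qint:
  assumes alpha: "exp (\<alpha> * complex_of_real (ln q)) = complex_of_real (1 / kappa)"
    and P: "\<And>n. P n \<noteq> 0 \<and> qEHT q (smult s1 [:- a1, 1:]) [:t0, t1:] n (poly (P n))"
  shows "\<exists>d. (\<forall>n. d n \<noteq> 0) \<and> (\<forall>m n. has_qint_inf q a
           (\<lambda>x. complex_of_real (poly (P n) x * poly (P m) x) * rho_w q \<alpha> a1 a2 a x)
           (if m = n then d n else 0))"
proof -
  have "\<forall>n. \<exists>S>0. (\<lambda>j. weight j * (poly (P n) (node j) * poly (P n) (node j))) sums S"
    using weight_poly_square_sums_pos P by blast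
  then obtain S where S: "\<And>n. 0 < S n \<and> (\<lambda>j. weight j * (poly (P n) (node j) * poly (P n) (node j))) sums S n"
    by (metis choice)
  define d where "d n = exp (\<alpha> * complex_of_real (ln a)) * complex_of_real (S n)" for n
  have qint: "has_qint_inf q a (\<lambda>x. complex_of_real (poly (P n) x * poly (P m) x) * rho_w q \<alpha> a1 a2 a x)
          (if m = n then d n else 0)" for m n
  proof (cases "m = n")
    case True
    then show ?thesis
      using has_qint_inf_of_weight_sums[OF alpha, of "\<lambda>x. poly (P n) x * poly (P n) x"] S[of n]
      by (simp add: d_def)
  next
    case False
    then show ?thesis
      using has_qint_inf_of_weight_sums[OF alpha qEHT_poly_orthogonal[of n "P n" m "P m"]] P by simp
  qed
  have "d n \<noteq> 0" for n
    using S[of n] by (simp add: d_def)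
  then show ?thesis
    using qint by (intro exI[of _ d] conjI allI)
qed

end

theorem theorem5p2:
  fixes q s1 a1 t0 t1 a2 b2 a :: real and \<alpha> :: complex
    and \<sigma>1 \<tau> \<sigma>2 :: "real poly"
  assumes q: "0 < q" "q < 1"
    and s1: "s1 \<noteq> 0" and a1: "a1 \<noteq> 0"
    and sig1: "\<sigma>1 = smult s1 [:- a1, 1:]"
    and tau: "\<tau> = [:t0, t1:]" and t1: "t1 \<noteq> 0"
    and sig2: "\<sigma>2 = smult q (\<sigma>1 + smult (1 - 1/q) ([:0, 1:] * \<tau>))"
    and sig2_fact: "\<sigma>2 = smult ((q - 1) * t1) ([:- a2, 1:] * [:- b2, 1:])"
    and zeros: "a2 < 0" "0 < a1" "a1 < b2"
    and Lam: "t1 / s1 < 0"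
    and a_def: "a = b2"
    and alpha: "exp (\<alpha> * complex_of_real (ln q)) = complex_of_real ((1 / q ^ 2) * ((q - 1) * t1) / s1)"
  shows "\<exists>P :: nat \<Rightarrow> real poly. \<exists>d :: nat \<Rightarrow> complex.
           (\<forall>n. P n \<noteq> 0 \<and> degree (P n) = n \<and> qEHT q \<sigma>1 \<tau> n (poly (P n)))
         \<and> (\<forall>n. d n \<noteq> 0)
         \<and> (\<forall>m n. has_qint_inf q a
                    (\<lambda>x. complex_of_real (poly (P n) x * poly (P m) x) * rho_w q \<alpha> a1 a2 a x)
                    (if m = n then d n else 0))"
proof -
  have "q * (s1 * (x - a1) + (1 - 1/q) * x * (t0 + t1 * x)) = (q - 1) * t1 * (x - a2) * (x - a)" for x
    using arg_cong[OF sig2_fact, of "\<lambda>p. poly p x"] unfolding sig2 sig1 tau a_def by (simp add: algebra_simps)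
  then interpret L: qEHT_lattice q s1 a1 t1 a2 a t0
    using q s1 t1 Lam zeros a_def by unfold_locales auto
  have alpha': "exp (\<alpha> * complex_of_real (ln q)) = complex_of_real (1 / L.kappa)"
    unfolding alpha L.kappa_def by (simp add: power2_eq_square)
  have "\<forall>n. \<exists>P. degree P = n \<and> P \<noteq> 0 \<and> qEHT q \<sigma>1 \<tau> n (poly P)"
    using exists_poly_solution_qEHT_linear[OF q t1] unfolding sig1 tau by blast
  then obtain P where P: "\<And>n. degree (P n) = n \<and> P n \<noteq> 0 \<and> qEHT q \<sigma>1 \<tau> n (poly (P n))"
    by (metis choice)
  then have "\<And>n. P n \<noteq> 0 \<and> qEHT q (smult s1 [:- a1, 1:]) [:t0, t1:] n (poly (P n))"
    unfolding sig1 tau by blast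
  from L.qEHT_polys_orthogonal_qint[OF alpha' this] obtain d where
    "\<forall>n. d n \<noteq> 0" "\<forall>m n. has_qint_inf q a
       (\<lambda>x. complex_of_real (poly (P n) x * poly (P m) x) * rho_w q \<alpha> a1 a2 a x) (if m = n then d n else 0)"
    by blast
  with P show ?thesis
    by (intro exI[of _ P] exI[of _ d] conjI allI) auto
qed

end
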